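(* Consider searching on a line with turn cost $t$ and lower bound $\lambda>0$, and suppose $s:=\frac{t}{2\lambda}\ge1$. Then the periodic strategy with distances $$x_i=\Big((1+s)\big(1+s^{-1}\big)^i-s\Big)\lambda,\qquad i\ge1,$$ is optimal, and its competitive ratio is $$\frac{2x_1+t+\lambda}{\lambda}=\frac{2\,(s+2)\,(s+\tfrac12)}{s}.$$
   Context: Searching on a line with turn cost. Fix $\lambda>0$, $t\ge 0$. A search strategy is a sequence $\mathcal S(i)=(x_i,r_i)$, $i\ge1$, with $x_i>0$, $r_i\in\{\mathrm{left},\mathrm{right}\}$ and $\sup\{x_i:r_i=\mathrm{left}\}=\sup\{x_i:r_i=\mathrm{right}\}=\infty$. At step $i$ the searcher walks distance $x_i$ from the origin along ray $r_i$ and, if the target is not found, walks back to the origin, paying an additional turn cost $t$; thus each unsuccessful step costs $2x_i+t$. The target is on one of the two rays at unknown distance $D\ge\lambda$ and is found at the first step $j$ with $r_j$ equal to its ray and $x_j\ge D$; the total cost is then $\sum_{i=1}^{j-1}(2x_i+t)+D$. The competitive ratio of $\mathcal S$ is the supremum over all target positions of total cost divided by $D$; a strategy is optimal if its competitive ratio is minimal among all search strategies. A periodic strategy with distances $x_i$ means $r_1\ne r_2$ and $r_{i+2}=r_i$ (the rays alternate). For a periodic strategy with increasing distances the competitive ratio equals $\max\Big\{\frac{2x_1+t+\lambda}{\lambda},\ \sup_{n\ge1}\frac{\sum_{i=1}^{n+1}(2x_i+t)+x_n}{x_n}\Big\}$. *)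

theory Defs
  imports Complex_Main "HOL-Library.Extended_Real"
begin

text \<open>A search strategy is given by distances x i and rays r i for i \<ge> 1
  (r i = True means right, False means left); index 0 is ignored.\<close>

definition valid_strategy :: "(nat \<Rightarrow> real) \<Rightarrow> (nat \<Rightarrow> bool) \<Rightarrow> bool" where
  "valid_strategy x r \<longleftrightarrow>
     (\<forall>i\<ge>1. x i > 0) \<and>
     (\<forall>M. \<exists>i\<ge>1. \<not> r i \<and> x i > M) \<and>
     (\<forall>M. \<exists>i\<ge>1. r i \<and> x i > M)"

definition find_step :: "(nat \<Rightarrow> real) \<Rightarrow> (nat \<Rightarrow> bool) \<Rightarrow> bool \<Rightarrow> real \<Rightarrow> nat" where
  "find_step x r rho D = (LEAST j. j \<ge> 1 \<and> r j = rho \<and> D \<le> x j)"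

definition search_cost :: "real \<Rightarrow> (nat \<Rightarrow> real) \<Rightarrow> (nat \<Rightarrow> bool) \<Rightarrow> bool \<Rightarrow> real \<Rightarrow> real" where
  "search_cost t x r rho D = (\<Sum>i=1..<find_step x r rho D. 2 * x i + t) + D"

definition comp_ratio :: "real \<Rightarrow> real \<Rightarrow> (nat \<Rightarrow> real) \<Rightarrow> (nat \<Rightarrow> bool) \<Rightarrow> ereal" where
  "comp_ratio lam t x r =
     (SUP p \<in> {(rho, D). lam \<le> D}. ereal (search_cost t x r (fst p) (snd p) / snd p))"

definition optimal_strategy :: "real \<Rightarrow> real \<Rightarrow> (nat \<Rightarrow> real) \<Rightarrow> (nat \<Rightarrow> bool) \<Rightarrow> bool" where
  "optimal_strategy lam t x r \<longleftrightarrow> valid_strategy x r \<and>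
     (\<forall>x' r'. valid_strategy x' r' \<longrightarrow> comp_ratio lam t x r \<le> comp_ratio lam t x' r')"

definition periodic_rays :: "(nat \<Rightarrow> bool) \<Rightarrow> bool" where
  "periodic_rays r \<longleftrightarrow> r 1 \<noteq> r 2 \<and> (\<forall>i\<ge>1. r (i + 2) = r i)"

end

theory Submission
  imports Defs
begin

(* Follow the "turns" of the searcher:
   the k-th turn is the first step exploring new ground on the ray opposite to
   the previous turn.  If a strategy has ratio R and c = R - 1, then the costs
   T_k spent before the k-th turn satisfy T_1 <= c lam and a linear recurrence
   T_{k+2} <= c/2 (T_{k+1} - T_k - t).  An elementary growth lemma shows that
   such a recurrence has no positive increasing solution unless
   c >= 2 (1 + s)^2 / s.

   For the given periodic strategy the cost of the first m steps
   is the geometric sum 2 lam (1 + s)^2 ((1 + 1/s)^m - 1).  A target found at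
   step m + 2 >= 3 was missed by step m, which bounds its ratio by
   optimal_ratio s; targets found at steps 1 and 2 are handled directly, and a
   target at distance lam on the second ray attains the ratio exactly. *)

definition optimal_ratio :: "real \<Rightarrow> real" where
  "optimal_ratio s = 1 + 2 * (1 + s)^2 / s"


section \<open>A growth lemma for linear recurrences\<close>

text \<open>For ratios r up to 1 + 1/s the quadratic r^2 dominates the linear term
  (r - 1) with the constant (1 + s)^2 / s; this is where s >= 1 enters.\<close>

lemma quadratic_ratio_bound:
  fixes s r :: real
  assumes s1: "s \<ge> 1" and rq: "r \<le> 1 + 1/s"
  shows "(r - 1) * (1 + s)^2 \<le> s * r^2"
proof -
  have "s * r \<le> s * (1 + 1/s)" using mult_left_mono[OF rq] s1 by simp
  also have "\<dots> = 1 + s" using s1 by (simp add: field_simps)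
  finally have sr: "s * r - (1 + s) \<le> 0" by simp
  have "1/s \<le> 1" using s1 by simp
  hence "r - (1 + s) \<le> 0" using rq s1 by linarith
  hence "0 \<le> (s * r - (1 + s)) * (r - (1 + s))" using sr by (simp add: mult_nonpos_nonpos)
  thus ?thesis by (simp add: algebra_simps power2_eq_square)
qed

text \<open>A positive, strictly increasing sequence whose first growth factor is at
  most 1 + 1/s cannot satisfy a_{k+2} <= c/2 (a_{k+1} - a_k) with a small
  constant c: otherwise its growth factors would decay geometrically below 1.\<close>

lemma slow_recurrence_impossible:
  fixes a :: "nat \<Rightarrow> real" and c s :: real
  assumes s1: "s \<ge> 1" and c: "c > 0"
    and inc: "\<And>k. a k < a (Suc k)" and a0: "a 0 > 0"
    and a1: "a 1 \<le> (1 + 1/s) * a 0"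
    and rec: "\<And>k. a (Suc (Suc k)) \<le> c/2 * (a (Suc k) - a k)"
  shows "c \<ge> 2 * (1 + s)^2 / s"
proof (rule ccontr)
  define q where "q = 1 + 1/s"
  define th where "th = c * s / (2 * (1 + s)^2)"
  assume "\<not> ?thesis"
  hence th1: "th < 1" using s1 by (simp add: th_def field_simps)
  have th0: "0 < th" using c s1 by (simp add: th_def)
  have q1: "q \<ge> 1" using s1 by (simp add: q_def)
  have pos: "a k > 0" for k
    by (induction k) (use a0 inc less_trans in blast)+
  have step: "c/2 * (r - 1) \<le> th * r^2" if "r \<le> q" for r
  proof -
    have "r - 1 \<le> s * r^2 / (1 + s)^2"
      using quadratic_ratio_bound[OF s1 that[unfolded q_def]] s1 by (simp add: field_simps)
    hence "c/2 * (r - 1) \<le> c/2 * (s * r^2 / (1 + s)^2)" using c by (intro mult_left_mono) auto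
    thus ?thesis by (simp add: th_def)
  qed
  have decay: "a (Suc k) \<le> th^k * q * a k" for k
  proof (induction k)
    case 0 then show ?case using a1 by (simp add: q_def)
  next
    case (Suc k)
    define r where "r = a (Suc k) / a k"
    have ar: "a (Suc k) = r * a k" using pos[of k] by (simp add: r_def)
    have rq1: "r \<le> th^k * q" using Suc pos[of k] by (simp add: r_def field_simps)
    also have "\<dots> \<le> q" using th0 th1 q1 by (simp add: power_le_one mult_left_le_one_le)
    finally have rq: "r \<le> q" .
    have "a (Suc (Suc k)) \<le> c/2 * (r - 1) * a k" using rec[of k] ar by (simp add: algebra_simps)
    also have "\<dots> \<le> th * r^2 * a k" using step[OF rq] pos[of k] by (simp add: mult_right_mono)
    also have "\<dots> = th * r * a (Suc k)" using ar by (simp add: power2_eq_square)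
    also have "\<dots> \<le> th * (th^k * q) * a (Suc k)" using rq1 th0 pos[of "Suc k"]
      by (simp add: mult_right_mono mult_left_mono)
    finally show ?case by (simp add: algebra_simps)
  qed
  obtain k where "th^k < 1/q" using real_arch_pow_inv[OF _ th1, of "1/q"] q1 by auto
  hence "th^k * q * a k < a k" using q1 pos[of k] by (simp add: field_simps)
  with decay[of k] inc[of k] show False by simp
qed


lemma valid_strategy_unbounded:
  assumes "valid_strategy y r"
  shows "\<exists>i\<ge>1. r i = rho \<and> M < y i"
  using assms unfolding valid_strategy_def by (cases rho) blast+

lemma find_step_finds:
  assumes "\<exists>i\<ge>1. r i = rho \<and> D \<le> y i"
  shows "1 \<le> find_step y r rho D \<and> r (find_step y r rho D) = rho \<and> D \<le> y (find_step y r rho D)"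
  unfolding find_step_def by (rule LeastI_ex) (use assms in auto)

lemma find_step_first:
  assumes "k < find_step y r rho D" and "1 \<le> k" and "r k = rho"
  shows "y k < D"
  using not_less_Least[OF assms(1)[unfolded find_step_def]] assms(2,3) by auto

definition prefix_cost :: "real \<Rightarrow> (nat \<Rightarrow> real) \<Rightarrow> nat \<Rightarrow> real" where
  "prefix_cost t y n = (\<Sum>i=1..<Suc n. 2 * y i + t)"

lemma prefix_cost_0 [simp]: "prefix_cost t y 0 = 0"
  by (simp add: prefix_cost_def)

lemma prefix_cost_Suc: "prefix_cost t y (Suc n) = prefix_cost t y n + (2 * y (Suc n) + t)"
  by (simp add: prefix_cost_def sum.atLeastLessThan_Suc)

lemma search_cost_prefix:
  assumes "1 \<le> find_step y r rho D"
  shows "search_cost t y r rho D = prefix_cost t y (find_step y r rho D - 1) + D"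
  using assms by (simp add: search_cost_def prefix_cost_def)

lemma prefix_cost_strict_mono:
  assumes "valid_strategy y r" and "t \<ge> 0"
  shows "strict_mono (prefix_cost t y)"
  unfolding strict_mono_Suc_iff using assms
  by (simp add: prefix_cost_Suc add_pos_nonneg valid_strategy_def)

lemma prefix_cost_mono:
  assumes "valid_strategy y r" and "t \<ge> 0" and "m \<le> n"
  shows "prefix_cost t y m \<le> prefix_cost t y n"
  using prefix_cost_strict_mono[OF assms(1,2)] assms(3) by (simp add: strict_mono_less_eq)

lemma le_mult_from_beyond:
  fixes T c B :: real
  assumes beyond: "\<And>D. D > B \<Longrightarrow> T \<le> c * D"
  shows "T \<le> c * B"
proof (cases "c \<le> 0")
  case True
  have "T \<le> c * (B + 1)" using beyond by simp
  also have "\<dots> \<le> c * B" using True by (simp add: algebra_simps)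
  finally show ?thesis .
next
  case False
  show ?thesis
  proof (rule ccontr)
    assume "\<not> ?thesis"
    hence gap: "T > c * B" by simp
    define D where "D = B + (T - c * B) / (2 * c)"
    have "D > B" and "c * D < T" using False gap by (simp_all add: D_def field_simps)
    with beyond show False by force
  qed
qed

text \<open>The basic constraint: if none of the first n steps on ray rho reaches
  beyond B >= lam, then a target just beyond B on rho is only found after these
  n steps, so a strategy of ratio R has spent at most (R - 1) B on them.\<close>

lemma prefix_cost_bound:
  assumes valid: "valid_strategy y r" and t: "t \<ge> 0"
    and ratio: "\<And>D. lam \<le> D \<Longrightarrow> search_cost t y r rho D / D \<le> R"
    and lam: "lam > 0" and B: "lam \<le> B"
    and short: "\<And>i. 1 \<le> i \<Longrightarrow> i \<le> n \<Longrightarrow> r i = rho \<Longrightarrow> y i \<le> B"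
  shows "prefix_cost t y n \<le> (R - 1) * B"
proof (rule le_mult_from_beyond)
  fix D assume DB: "D > B"
  define j where "j = find_step y r rho D"
  have j: "1 \<le> j \<and> r j = rho \<and> D \<le> y j"
    unfolding j_def using valid_strategy_unbounded[OF valid, of rho D]
    by (intro find_step_finds) (auto intro: less_imp_le)
  have "n < j"
  proof (rule ccontr)
    assume "\<not> n < j"
    with short j have "y j \<le> B" by auto
    with j DB show False by simp
  qed
  hence "prefix_cost t y n \<le> prefix_cost t y (j - 1)"
    using valid t by (intro prefix_cost_mono) auto
  moreover have "search_cost t y r rho D = prefix_cost t y (j - 1) + D"
    using j by (simp add: search_cost_prefix j_def)
  moreover have "search_cost t y r rho D \<le> R * D"
    using ratio[of D] DB B lam by (simp add: divide_le_eq)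
  ultimately show "prefix_cost t y n \<le> (R - 1) * D" by (simp add: algebra_simps)
qed


section \<open>Record steps and turns\<close>

definition record_step :: "real \<Rightarrow> (nat \<Rightarrow> real) \<Rightarrow> (nat \<Rightarrow> bool) \<Rightarrow> nat \<Rightarrow> bool" where
  "record_step lam y r i \<longleftrightarrow>
     1 \<le> i \<and> lam < y i \<and> (\<forall>i'. 1 \<le> i' \<and> i' < i \<and> r i' = r i \<longrightarrow> y i' < y i)"

primrec turn :: "real \<Rightarrow> (nat \<Rightarrow> real) \<Rightarrow> (nat \<Rightarrow> bool) \<Rightarrow> nat \<Rightarrow> nat" where
  "turn lam y r 0 = (LEAST i. record_step lam y r i)"
| "turn lam y r (Suc k) =
     (LEAST i. turn lam y r k < i \<and> record_step lam y r i \<and> r i \<noteq> r (turn lam y r k))"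

declare turn.simps [simp del]

text \<open>A valid strategy has record steps on each ray arbitrarily late: take the
  first step on the ray that beats all earlier steps there.\<close>

lemma record_step_exists:
  assumes valid: "valid_strategy y r"
  shows "\<exists>i > N. record_step lam y r i \<and> r i = rho"
proof -
  define S where "S = {i. 1 \<le> i \<and> i \<le> N \<and> r i = rho}"
  have fS: "finite S" unfolding S_def by (rule finite_subset[of _ "{..N}"]) auto
  define B where "B = Max (insert lam (y ` S))"
  have B: "lam \<le> B" "\<And>i. i \<in> S \<Longrightarrow> y i \<le> B" using fS by (auto simp: B_def)
  define i where "i = (LEAST i. 1 \<le> i \<and> r i = rho \<and> B < y i)"
  have i: "1 \<le> i \<and> r i = rho \<and> B < y i"
    unfolding i_def by (rule LeastI_ex) (use valid_strategy_unbounded[OF valid, of rho B] in auto)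
  have before: "\<not> (1 \<le> i' \<and> r i' = rho \<and> B < y i')" if "i' < i" for i'
    using not_less_Least[OF that[unfolded i_def]] .
  have "N < i"
  proof (rule ccontr)
    assume "\<not> N < i"
    hence "i \<in> S" using i by (auto simp: S_def)
    with B i show False by force
  qed
  moreover have "record_step lam y r i"
    unfolding record_step_def
  proof (intro conjI allI impI)
    show "1 \<le> i" "lam < y i" using i B by auto
    fix i' assume i': "1 \<le> i' \<and> i' < i \<and> r i' = r i"
    show "y i' < y i"
    proof (cases "i' \<le> N")
      case True
      hence "i' \<in> S" using i' i by (auto simp: S_def)
      with B i show ?thesis by force
    next
      case False
      with i' i before[of i'] show ?thesis by auto
    qed
  qed
  ultimately show ?thesis using i by blast
qed

lemma farthest_step_is_record:
  assumes "1 \<le> i0" "i0 \<le> n" "r i0 = rho" "lam < y i0"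
  shows "\<exists>j. 1 \<le> j \<and> j \<le> n \<and> r j = rho \<and> record_step lam y r j \<and>
             (\<forall>i. 1 \<le> i \<longrightarrow> i \<le> n \<longrightarrow> r i = rho \<longrightarrow> y i \<le> y j)"
proof -
  define S where "S = {i. 1 \<le> i \<and> i \<le> n \<and> r i = rho}"
  have fS: "finite S" unfolding S_def by (rule finite_subset[of _ "{..n}"]) auto
  have i0S: "i0 \<in> S" using assms by (simp add: S_def)
  define m where "m = Max (y ` S)"
  have m: "\<And>i. i \<in> S \<Longrightarrow> y i \<le> m" unfolding m_def using fS by auto
  have "m \<in> y ` S" unfolding m_def using fS i0S by (intro Max_in) auto
  then obtain k where k: "k \<in> S" "y k = m" by auto
  define j where "j = (LEAST j. j \<in> S \<and> y j = m)"
  have j: "j \<in> S \<and> y j = m" unfolding j_def by (rule LeastI[of _ k]) (use k in auto)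
  have "record_step lam y r j"
    unfolding record_step_def
  proof (intro conjI allI impI)
    show "1 \<le> j" using j by (simp add: S_def)
    show "lam < y j" using j m[OF i0S] assms by simp
    fix i' assume i': "1 \<le> i' \<and> i' < j \<and> r i' = r j"
    hence i'S: "i' \<in> S" using j by (auto simp: S_def)
    have "\<not> (i' \<in> S \<and> y i' = m)" using i' not_less_Least[of i' "\<lambda>j. j \<in> S \<and> y j = m"]
      by (simp add: j_def)
    with i'S m[OF i'S] j show "y i' < y j" by auto
  qed
  with j m show ?thesis by (auto simp: S_def)
qed

context
  fixes lam :: real and y :: "nat \<Rightarrow> real" and r :: "nat \<Rightarrow> bool"
  assumes valid: "valid_strategy y r"
begin

lemma turn_0_record: "record_step lam y r (turn lam y r 0)"
  unfolding turn.simps(1) by (rule LeastI_ex) (use record_step_exists[OF valid, of 0 lam True] in blast)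

lemma turn_Suc:
  "turn lam y r k < turn lam y r (Suc k) \<and> record_step lam y r (turn lam y r (Suc k))
   \<and> r (turn lam y r (Suc k)) \<noteq> r (turn lam y r k)"
proof -
  obtain i where "turn lam y r k < i \<and> record_step lam y r i \<and> r i = (\<not> r (turn lam y r k))"
    using record_step_exists[OF valid] by blast
  hence "turn lam y r k < i \<and> record_step lam y r i \<and> r i \<noteq> r (turn lam y r k)" by simp
  thus ?thesis unfolding turn.simps(2) by (rule LeastI)
qed

lemma turn_record: "record_step lam y r (turn lam y r k)"
  by (cases k) (simp_all only: turn_0_record turn_Suc)

lemma turn_ge_1: "1 \<le> turn lam y r k"
  using turn_record[of k] unfolding record_step_def by blast

lemma turn_strict_mono: "m < n \<Longrightarrow> turn lam y r m < turn lam y r n"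
  by (rule lift_Suc_mono_less[of "turn lam y r"]) (use turn_Suc in blast)

lemma turn_0_first: "record_step lam y r i \<Longrightarrow> turn lam y r 0 \<le> i"
  unfolding turn.simps(1) by (rule Least_le)

lemma records_between_turns:
  assumes "turn lam y r k \<le> i" "i < turn lam y r (Suc k)" "record_step lam y r i"
  shows "r i = r (turn lam y r k)"
proof (cases "i = turn lam y r k")
  case False
  hence "turn lam y r k < i" using assms by simp
  moreover have "\<not> (turn lam y r k < i \<and> record_step lam y r i \<and> r i \<noteq> r (turn lam y r k))"
    using not_less_Least[of i] assms(2) by (simp only: turn.simps(2))
  ultimately show ?thesis using assms(3) by blast
qed simp

end


section \<open>The lower bound\<close>

context
  fixes lam t R :: real and y :: "nat \<Rightarrow> real" and r :: "nat \<Rightarrow> bool"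
  assumes valid: "valid_strategy y r" and lam: "lam > 0" and t: "t > 0"
    and ratio: "\<And>rho D. lam \<le> D \<Longrightarrow> search_cost t y r rho D / D \<le> R"
begin

abbreviation turn_cost :: "nat \<Rightarrow> real" where
  "turn_cost k \<equiv> prefix_cost t y (turn lam y r k - 1)"

lemma turn_cost_strict_mono: "turn_cost k < turn_cost (Suc k)"
proof -
  have "turn lam y r k - 1 < turn lam y r (Suc k) - 1"
    using turn_strict_mono[OF valid, of k "Suc k" lam] turn_ge_1[OF valid, of lam k] by simp
  thus ?thesis using prefix_cost_strict_mono[OF valid] t by (simp add: strict_mono_less)
qed

lemma turn_cost_nonneg: "turn_cost k \<ge> 0"
  using prefix_cost_mono[OF valid, of t 0] t by simp

text \<open>Before the second turn, the ray of the second turn was never explored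
  beyond lam.\<close>

lemma first_turn_cost: "turn_cost 1 \<le> (R - 1) * lam"
proof (rule prefix_cost_bound[OF valid _ ratio lam])
  fix i assume i: "1 \<le> i" "i \<le> turn lam y r 1 - 1" "r i = r (turn lam y r 1)"
  show "y i \<le> lam"
  proof (rule ccontr)
    assume "\<not> y i \<le> lam"
    then obtain j where j: "1 \<le> j" "j \<le> turn lam y r 1 - 1" "r j = r (turn lam y r 1)"
      "record_step lam y r j"
      using farthest_step_is_record[of i "turn lam y r 1 - 1" r _ lam y] i by auto
    have "turn lam y r 0 \<le> j" using turn_0_first[OF valid j(4)] .
    moreover have "j < turn lam y r (Suc 0)" using j(2) turn_ge_1[OF valid, of lam 1] by simp
    ultimately have "r j = r (turn lam y r 0)" using records_between_turns[OF valid _ _ j(4)] by blast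
    with j(3) turn_Suc[OF valid, of lam 0] show False by simp
  qed
qed (use t in auto)

lemma ratio_gt_1: "R > 1"
proof -
  have "turn lam y r 0 - 1 < turn lam y r 1 - 1"
    using turn_strict_mono[OF valid, of 0 1 lam] turn_ge_1[OF valid, of lam 0] by simp
  hence "turn_cost 1 > 0"
    using turn_cost_strict_mono[of 0] turn_cost_nonneg[of 0] by simp
  with first_turn_cost lam show ?thesis by (smt (verit) mult_nonpos_nonneg)
qed

text \<open>The recurrence: let j be the first farthest step on the ray of turn k
  before turn k+2.  It is a record between turns k and k+1, so its full cost
  2 y j + t fits into the cost spent between these turns, while the cost before
  turn k+2 is at most (R - 1) y j by the basic constraint.\<close>

lemma turn_cost_recurrence:
  "turn_cost (Suc (Suc k)) \<le> (R - 1) / 2 * (turn_cost (Suc k) - turn_cost k - t)"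
proof -
  let ?g = "turn lam y r" and ?n = "turn lam y r (Suc (Suc k)) - 1"
  have gk: "?g k \<le> ?n" using turn_strict_mono[OF valid, of k "Suc (Suc k)" lam] by simp
  have yk: "lam < y (?g k)" using turn_record[OF valid, of lam k] by (simp add: record_step_def)
  obtain j where j: "1 \<le> j" "j \<le> ?n" "r j = r (?g k)" "record_step lam y r j"
    and farthest: "\<And>i. 1 \<le> i \<Longrightarrow> i \<le> ?n \<Longrightarrow> r i = r (?g k) \<Longrightarrow> y i \<le> y j"
    using farthest_step_is_record[of "?g k" ?n r "r (?g k)" lam y] turn_ge_1[OF valid] gk yk
    by blast
  have lo: "?g k \<le> j"
  proof (rule ccontr)
    assume "\<not> ?g k \<le> j"
    hence "y j < y (?g k)" using turn_record[OF valid, of lam k] j(1,3) by (auto simp: record_step_def)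
    with farthest[of "?g k"] turn_ge_1[OF valid] gk show False by fastforce
  qed
  have hi: "j < ?g (Suc k)"
  proof (rule ccontr)
    assume "\<not> j < ?g (Suc k)"
    moreover have "j < ?g (Suc (Suc k))" using j(2) turn_ge_1[OF valid, of lam "Suc (Suc k)"] by simp
    ultimately have "r j = r (?g (Suc k))" using records_between_turns[OF valid _ _ j(4)] by simp
    with j(3) turn_Suc[OF valid, of lam k] show False by simp
  qed
  have "lam \<le> y j" using j(4) by (simp add: record_step_def)
  hence reach: "turn_cost (Suc (Suc k)) \<le> (R - 1) * y j"
    using prefix_cost_bound[OF valid _ ratio lam _ farthest] t by simp
  have "prefix_cost t y j = prefix_cost t y (j - 1) + (2 * y j + t)"
    using j(1) prefix_cost_Suc[of t y "j - 1"] by simp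
  moreover have "prefix_cost t y j \<le> turn_cost (Suc k)"
    using prefix_cost_mono[OF valid] hi t by simp
  moreover have "turn_cost k \<le> prefix_cost t y (j - 1)"
    using prefix_cost_mono[OF valid] lo t by simp
  ultimately have "y j \<le> (turn_cost (Suc k) - turn_cost k - t) / 2" by simp
  hence "(R - 1) * y j \<le> (R - 1) * ((turn_cost (Suc k) - turn_cost k - t) / 2)"
    using ratio_gt_1 by (intro mult_left_mono) auto
  with reach show ?thesis by simp
qed

end

text \<open>Shifting the turn costs by a constant turns the recurrence into the
  homogeneous form of the growth lemma.\<close>

lemma ratio_lower_bound:
  fixes lam t s R :: real
  assumes valid: "valid_strategy y r" and lam: "lam > 0"
    and s: "s = t / (2 * lam)" and s1: "s \<ge> 1"
    and ratio: "\<And>rho D. lam \<le> D \<Longrightarrow> search_cost t y r rho D / D \<le> R"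
  shows "optimal_ratio s \<le> R"
proof -
  have t_eq: "t = 2 * lam * s" using s lam by (simp add: field_simps)
  hence t: "t > 0" using s1 lam by simp
  note facts = valid lam t ratio
  define c where "c = R - 1"
  define T where "T k = prefix_cost t y (turn lam y r k - 1)" for k
  define a where "a k = T k / 2 + c * t / 4" for k
  have c: "c > 0" using ratio_gt_1[OF facts] by (simp add: c_def)
  have a0: "a 0 \<ge> c * t / 4" using turn_cost_nonneg[OF facts] by (simp add: a_def T_def)
  have "a 1 \<le> c * lam / 2 + c * t / 4"
    using first_turn_cost[OF facts] by (simp add: a_def T_def c_def)
  also have "\<dots> = (1 + 1/s) * (c * t / 4)" using t_eq lam s1 by (simp add: field_simps)
  also have "\<dots> \<le> (1 + 1/s) * a 0" using a0 s1 by (intro mult_left_mono) auto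
  finally have a1: "a 1 \<le> (1 + 1/s) * a 0" .
  have "c \<ge> 2 * (1 + s)^2 / s"
  proof (rule slow_recurrence_impossible[OF s1 c _ _ a1])
    show "a k < a (Suc k)" for k using turn_cost_strict_mono[OF facts] by (simp add: a_def T_def)
    show "a 0 > 0" using a0 c t by (smt (verit) mult_pos_pos divide_pos_pos)
    show "a (Suc (Suc k)) \<le> c/2 * (a (Suc k) - a k)" for k
    proof -
      have "T (Suc (Suc k)) \<le> c/2 * (T (Suc k) - T k - t)"
        using turn_cost_recurrence[OF facts, of k] by (simp add: T_def c_def)
      hence "a (Suc (Suc k)) \<le> c/4 * (T (Suc k) - T k - t) + c * t / 4" by (simp add: a_def)
      also have "\<dots> = c/2 * (a (Suc k) - a k)" by (simp add: a_def algebra_simps)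
      finally show ?thesis .
    qed
  qed
  thus ?thesis by (simp add: optimal_ratio_def c_def)
qed


lemma comp_ratio_ge:
  "lam \<le> D \<Longrightarrow> ereal (search_cost t y r rho D / D) \<le> comp_ratio lam t y r"
  unfolding comp_ratio_def by (rule SUP_upper2[of "(rho, D)"]) auto

lemma comp_ratio_le:
  "(\<And>rho D. lam \<le> D \<Longrightarrow> search_cost t y r rho D / D \<le> R) \<Longrightarrow> comp_ratio lam t y r \<le> ereal R"
  unfolding comp_ratio_def by (rule SUP_least) auto

theorem comp_ratio_lower_bound:
  assumes valid: "valid_strategy y r" and lam: "lam > 0"
    and s: "s = t / (2 * lam)" and s1: "s \<ge> 1"
  shows "ereal (optimal_ratio s) \<le> comp_ratio lam t y r"
proof (cases "comp_ratio lam t y r")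
  case (real R)
  have "search_cost t y r rho D / D \<le> R" if "lam \<le> D" for rho D
    using comp_ratio_ge[OF that, of t y r rho] real by simp
  with ratio_lower_bound[OF valid lam s s1] real show ?thesis by simp
next
  case MInf
  with comp_ratio_ge[of lam lam t y r True] show ?thesis by simp
qed simp


section \<open>The optimal periodic strategy\<close>

context
  fixes lam t s :: real and x :: "nat \<Rightarrow> real" and r :: "nat \<Rightarrow> bool"
  assumes lam: "lam > 0" and t: "t \<ge> 0"
    and s: "s = t / (2 * lam)" and s1: "s \<ge> 1"
    and x: "\<And>i. x i = ((1 + s) * (1 + 1 / s) ^ i - s) * lam"
    and per: "periodic_rays r"
begin

lemma t_eq: "t = 2 * s * lam"
  using s lam by (simp add: field_simps)

text \<open>By Bernoulli's inequality the distances grow at least linearly.\<close>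

lemma x_ge: "x i \<ge> (1 + real i) * lam"
proof -
  have "0 < 1/s" using s1 by simp
  hence "1 + real i * (1/s) \<le> (1 + 1/s) ^ i" by (intro Bernoulli_inequality) linarith
  hence "(1 + s) * (1 + real i * (1/s)) \<le> (1 + s) * (1 + 1/s)^i" using s1 by (intro mult_left_mono) auto
  moreover have "(1 + s) * (1 + real i * (1/s)) - s = 1 + real i + real i / s"
    using s1 by (simp add: field_simps)
  moreover have "real i / s \<ge> 0" using s1 by simp
  ultimately have "1 + real i \<le> (1 + s) * (1 + 1/s)^i - s" by linarith
  thus ?thesis unfolding x using lam by (intro mult_right_mono) auto
qed

lemma x_pos: "x i > 0"
proof -
  have "(1 + real i) * lam > 0" using lam by simp
  with x_ge[of i] show ?thesis by linarith
qed

lemma r_alternates: "1 \<le> i \<Longrightarrow> r i = (if odd i then r 1 else r 2)"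
proof (induction i rule: less_induct)
  case (less i)
  show ?case
  proof (cases "i \<le> 2")
    case True
    with less.prems have "i = 1 \<or> i = 2" by auto
    thus ?thesis by auto
  next
    case False
    define m where "m = i - 2"
    have m: "i = m + 2" "1 \<le> m" using False by (auto simp: m_def)
    have "r i = r m" using per m unfolding periodic_rays_def by simp
    also have "\<dots> = (if odd m then r 1 else r 2)" using less.IH[of m] m by simp
    finally show ?thesis using m by simp
  qed
qed

lemma r_1_2: "r 1 \<noteq> r 2"
  using per by (simp add: periodic_rays_def)

lemma x_unbounded_on_ray: "\<exists>i\<ge>1. r i = rho \<and> M < x i"
proof -
  obtain N :: nat where "max M lam / lam < real N" using reals_Archimedean2 by blast
  hence MN: "max M lam < real N * lam" using lam by (simp add: field_simps)
  have big: "M < x i" if "N \<le> i" for i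
  proof -
    have "real N * lam \<le> (1 + real i) * lam" using that lam by (intro mult_right_mono) auto
    thus ?thesis using x_ge[of i] MN by linarith
  qed
  have odd: "r (2 * N + 1) = r 1" using r_alternates[of "2 * N + 1"] by simp
  have even: "r (2 * N + 2) = r 2" using r_alternates[of "2 * N + 2"] by simp
  have "rho = r 1 \<or> rho = r 2" using r_1_2 by auto
  thus ?thesis
  proof
    assume "rho = r 1"
    thus ?thesis using odd big[of "2 * N + 1"] by (intro exI[of _ "2 * N + 1"]) auto
  next
    assume "rho = r 2"
    thus ?thesis using even big[of "2 * N + 2"] by (intro exI[of _ "2 * N + 2"]) auto
  qed
qed

lemma valid_x: "valid_strategy x r"
  unfolding valid_strategy_def using x_pos x_unbounded_on_ray by blast

lemma prefix_cost_x: "prefix_cost t x m = 2 * lam * (1 + s)^2 * ((1 + 1/s)^m - 1)"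
proof (induction m)
  case (Suc m)
  have "prefix_cost t x (Suc m) = 2 * lam * (1 + s)^2 * ((1 + 1/s)^m - 1) + (2 * x (Suc m) + t)"
    using Suc by (simp add: prefix_cost_Suc)
  also have "\<dots> = 2 * lam * (1 + s)^2 * ((1 + 1/s)^Suc m - 1)"
    unfolding x t_eq using s1 by (simp add: field_simps power2_eq_square)
  finally show ?case .
qed simp

lemma ratio_x: "(2 * x 1 + t + lam) / lam = optimal_ratio s"
proof -
  have x1: "x 1 = (2 + 1/s) * lam" unfolding x using s1 by (simp add: field_simps)
  show ?thesis unfolding optimal_ratio_def x1 t_eq using s1 lam by (simp add: field_simps power2_eq_square)
qed

text \<open>Every target costs at most optimal_ratio s times its distance: if it is
  found at step m + 2 >= 3, then step m on the same ray missed it, and the cost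
  of the first m + 1 steps equals (optimal_ratio s - 1) x m.\<close>

lemma search_cost_x_bound:
  assumes D: "lam \<le> D"
  shows "search_cost t x r rho D / D \<le> optimal_ratio s"
proof -
  have Dp: "D > 0" using D lam by simp
  define j where "j = find_step x r rho D"
  have j: "1 \<le> j \<and> r j = rho \<and> D \<le> x j"
    unfolding j_def using x_unbounded_on_ray[of rho D] by (intro find_step_finds) (auto intro: less_imp_le)
  have cost: "search_cost t x r rho D = prefix_cost t x (j - 1) + D"
    using j by (simp add: search_cost_prefix j_def)
  have R1: "optimal_ratio s \<ge> 1" using s1 by (simp add: optimal_ratio_def)
  consider "j = 1" | "j = 2" | "j \<ge> 3" using j by linarith
  thus ?thesis
  proof cases
    case 1
    thus ?thesis using cost Dp R1 by simp
  next
    case 2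
    hence "search_cost t x r rho D / D = (2 * x 1 + t) / D + 1"
      using cost Dp by (simp add: prefix_cost_def add_divide_distrib)
    also have "\<dots> \<le> (2 * x 1 + t) / lam + 1"
      using D lam x_pos[of 1] t by (simp add: divide_left_mono)
    also have "\<dots> = optimal_ratio s"
      using ratio_x[symmetric] lam by (simp add: add_divide_distrib)
    finally show ?thesis .
  next
    case 3
    define m where "m = j - 2"
    have jm: "j = Suc (Suc m)" and m1: "1 \<le> m" using 3 by (auto simp: m_def)
    have "r m = r j" using per m1 jm unfolding periodic_rays_def by (simp add: numeral_2_eq_2)
    hence missed: "x m < D" using find_step_first[of m x r rho D] j jm m1 by (simp add: j_def)
    have "prefix_cost t x (j - 1) = 2 * lam * (1 + s)^2 * ((1 + 1/s)^Suc m - 1)"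
      using prefix_cost_x[of "Suc m"] jm by simp
    also have "\<dots> = (optimal_ratio s - 1) * x m"
      unfolding optimal_ratio_def x using s1 by (simp add: field_simps power2_eq_square)
    also have "\<dots> \<le> (optimal_ratio s - 1) * D" using missed R1 by (intro mult_left_mono) auto
    finally have "search_cost t x r rho D \<le> optimal_ratio s * D" using cost by (simp add: algebra_simps)
    thus ?thesis using Dp by (simp add: divide_le_eq)
  qed
qed

text \<open>A target at distance lam on the second ray is found at step 2.\<close>

lemma search_cost_x_attained: "search_cost t x r (r 2) lam / lam = optimal_ratio s"
proof -
  have "find_step x r (r 2) lam = 2"
    unfolding find_step_def
  proof (rule Least_equality)
    show "2 \<ge> (1::nat) \<and> r 2 = r 2 \<and> lam \<le> x 2" using x_ge[of 2] lam by simp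
    show "2 \<le> k" if "1 \<le> k \<and> r k = r 2 \<and> lam \<le> x k" for k
      using that r_1_2 by (cases "k = 1") auto
  qed
  thus ?thesis using ratio_x by (simp add: search_cost_def numeral_2_eq_2)
qed

lemma comp_ratio_x: "comp_ratio lam t x r = ereal (optimal_ratio s)"
proof (rule antisym)
  show "comp_ratio lam t x r \<le> ereal (optimal_ratio s)"
    by (rule comp_ratio_le) (rule search_cost_x_bound)
  show "ereal (optimal_ratio s) \<le> comp_ratio lam t x r"
    using comp_ratio_ge[of lam lam t x r "r 2"] search_cost_x_attained by simp
qed

end


theorem theorem4:
  fixes lam t s :: real and x :: "nat \<Rightarrow> real" and r :: "nat \<Rightarrow> bool"
  assumes "lam > 0" and "t \<ge> 0"
    and "s = t / (2 * lam)" and "s \<ge> 1"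
    and "\<And>i. x i = ((1 + s) * (1 + 1 / s) ^ i - s) * lam"
    and "periodic_rays r"
  shows "optimal_strategy lam t x r
    \<and> comp_ratio lam t x r = ereal ((2 * x 1 + t + lam) / lam)
    \<and> (2 * x 1 + t + lam) / lam = 2 * (s + 2) * (s + 1 / 2) / s"
proof -
  have ratio: "(2 * x 1 + t + lam) / lam = optimal_ratio s" by (rule ratio_x[OF assms])
  have comp: "comp_ratio lam t x r = ereal (optimal_ratio s)" by (rule comp_ratio_x[OF assms])
  have "comp_ratio lam t x r \<le> comp_ratio lam t x' r'" if "valid_strategy x' r'" for x' r'
    using comp comp_ratio_lower_bound[OF that assms(1,3,4)] by simp
  hence "optimal_strategy lam t x r"
    using valid_x[OF assms] by (simp add: optimal_strategy_def)
  moreover have "optimal_ratio s = 2 * (s + 2) * (s + 1 / 2) / s"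
    using assms(4) by (simp add: optimal_ratio_def field_simps power2_eq_square)
  ultimately show ?thesis using ratio comp by simp
qed

end
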